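(* Let $G=(V,E)$ be a finite simple connected graph of order $n\geq 2$. Then $\alpha_0(S(G)) = n-\beta^*_0(G)$.
   Context: For a finite simple graph $G=(V,E)$, the splitting graph $S(G)$ is obtained from $G$ by adding, for each vertex $v\in V$, a new vertex $v'$, and joining $v'$ to a vertex $u\in V$ if and only if $uv\in E$ (the new vertices are pairwise non-adjacent; the edges of $G$ are kept). $\alpha_0(H)$ denotes the vertex cover number of a graph $H$ (minimum size of a set of vertices meeting every edge). For a graph $G$ of order $n\geq 2$, $\beta_0^*(G):=\max\{|S|-|N(S)| : S \text{ is an independent set of } G\}$, where $N(S)$ is the set of vertices of $G$ adjacent to some vertex of $S$ (the empty set counts as an independent set). *)

theory Defs
  imports Main
begin

definition simple_graph :: "'a set \<Rightarrow> ('a \<Rightarrow> 'a \<Rightarrow> bool) \<Rightarrow> bool" where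
  "simple_graph V E \<longleftrightarrow> finite V \<and> (\<forall>u v. E u v \<longrightarrow> u \<in> V \<and> v \<in> V)
     \<and> (\<forall>u v. E u v \<longrightarrow> E v u) \<and> (\<forall>v. \<not> E v v)"

definition connected_graph :: "'a set \<Rightarrow> ('a \<Rightarrow> 'a \<Rightarrow> bool) \<Rightarrow> bool" where
  "connected_graph V E \<longleftrightarrow> (\<forall>u\<in>V. \<forall>v\<in>V. E\<^sup>*\<^sup>* u v)"

text \<open>Splitting graph S(G): vertices (v,True) are the original vertices,
(v,False) is the new copy v'.  Edges: the edges of G, plus v' -- u whenever uv in E.\<close>
definition split_vertices :: "'a set \<Rightarrow> ('a \<times> bool) set" where
  "split_vertices V = V \<times> UNIV"

definition split_edges :: "('a \<Rightarrow> 'a \<Rightarrow> bool) \<Rightarrow> ('a \<times> bool) \<Rightarrow> ('a \<times> bool) \<Rightarrow> bool" where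
  "split_edges E x y \<longleftrightarrow>
     (snd x \<and> snd y \<and> E (fst x) (fst y))
   \<or> (\<not> snd x \<and> snd y \<and> E (fst x) (fst y))
   \<or> (snd x \<and> \<not> snd y \<and> E (fst x) (fst y))"

definition vertex_cover :: "'a set \<Rightarrow> ('a \<Rightarrow> 'a \<Rightarrow> bool) \<Rightarrow> 'a set \<Rightarrow> bool" where
  "vertex_cover V E C \<longleftrightarrow> C \<subseteq> V \<and> (\<forall>u v. E u v \<longrightarrow> u \<in> C \<or> v \<in> C)"

definition vertex_cover_number :: "'a set \<Rightarrow> ('a \<Rightarrow> 'a \<Rightarrow> bool) \<Rightarrow> nat" where
  "vertex_cover_number V E = Min (card ` {C. vertex_cover V E C})"

definition independent_set :: "'a set \<Rightarrow> ('a \<Rightarrow> 'a \<Rightarrow> bool) \<Rightarrow> 'a set \<Rightarrow> bool" where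
  "independent_set V E S \<longleftrightarrow> S \<subseteq> V \<and> (\<forall>u\<in>S. \<forall>v\<in>S. \<not> E u v)"

definition nbhd :: "'a set \<Rightarrow> ('a \<Rightarrow> 'a \<Rightarrow> bool) \<Rightarrow> 'a set \<Rightarrow> 'a set" where
  "nbhd V E S = {v \<in> V. \<exists>u\<in>S. E u v}"

definition beta0_star :: "'a set \<Rightarrow> ('a \<Rightarrow> 'a \<Rightarrow> bool) \<Rightarrow> int" where
  "beta0_star V E = Max ((\<lambda>S. int (card S) - int (card (nbhd V E S))) ` {S. independent_set V E S})"

end

theory Submission
  imports Defs
begin

text \<open>If C covers S(G), the original vertices A missing from C form an independent set of G,
  and C must contain every other original vertex as well as the copy v' of every v \<in> N(A);
  hence |C| \<ge> n - |A| + |N(A)| \<ge> n - beta_0^*(G).  Conversely, for an independent set S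
  attaining beta_0^*(G), the set (V - S) \<union> N(S)' covers S(G) and has exactly that size.\<close>

definition split_cover :: "'a set \<Rightarrow> ('a \<Rightarrow> 'a \<Rightarrow> bool) \<Rightarrow> 'a set \<Rightarrow> ('a \<times> bool) set" where
  "split_cover V E S = (\<lambda>v. (v, True)) ` (V - S) \<union> (\<lambda>v. (v, False)) ` nbhd V E S"

lemma finite_nbhd: "finite V \<Longrightarrow> finite (nbhd V E S)"
  by (simp add: nbhd_def)

lemma finite_split_vertices: "finite V \<Longrightarrow> finite (split_vertices V)"
  by (simp add: split_vertices_def)

lemma vertex_cover_number_eqI:
  assumes "finite V" and "vertex_cover V E C\<^sub>0"
    and "\<And>C. vertex_cover V E C \<Longrightarrow> card C\<^sub>0 \<le> card C"
  shows "vertex_cover_number V E = card C\<^sub>0"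
proof -
  have "finite {C. vertex_cover V E C}"
    by (rule finite_subset[of _ "Pow V"]) (auto simp: vertex_cover_def assms(1))
  then show ?thesis
    unfolding vertex_cover_number_def using assms(2,3)
    by (intro Min_eqI) auto
qed

lemma finite_independent_sets: "finite V \<Longrightarrow> finite {S. independent_set V E S}"
  by (rule finite_subset[of _ "Pow V"]) (auto simp: independent_set_def)

lemma beta0_star_ge:
  assumes "finite V" and "independent_set V E S"
  shows "int (card S) - int (card (nbhd V E S)) \<le> beta0_star V E"
  unfolding beta0_star_def using assms finite_independent_sets by (intro Max_ge) auto

lemma beta0_star_attained:
  assumes "finite V"
  obtains S where "independent_set V E S"
    and "beta0_star V E = int (card S) - int (card (nbhd V E S))"
proof -
  have "independent_set V E {}" by (simp add: independent_set_def)
  then have "beta0_star V E \<in> (\<lambda>S. int (card S) - int (card (nbhd V E S))) ` {S. independent_set V E S}"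
    unfolding beta0_star_def using finite_independent_sets[OF assms] by (intro Max_in) auto
  then show ?thesis using that by auto
qed

lemma card_split_cover:
  assumes "finite V" and "S \<subseteq> V"
  shows "int (card (split_cover V E S)) = int (card V) - int (card S) + int (card (nbhd V E S))"
proof -
  have "card (split_cover V E S) = card (V - S) + card (nbhd V E S)"
    unfolding split_cover_def using assms(1) finite_nbhd[OF assms(1)]
    by (subst card_Un_disjoint) (auto simp: card_image inj_on_def)
  moreover have "card (V - S) = card V - card S" and "card S \<le> card V"
    using assms by (auto simp: card_Diff_subset finite_subset card_mono)
  ultimately show ?thesis by simp
qed

lemma vertex_cover_split_cover:
  assumes "simple_graph V E" and "independent_set V E S"
  shows "vertex_cover (split_vertices V) (split_edges E) (split_cover V E S)"
proof -
  have EV: "\<And>u v. E u v \<Longrightarrow> u \<in> V \<and> v \<in> V" and sym: "\<And>u v. E u v \<Longrightarrow> E v u"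
    using assms(1) by (auto simp: simple_graph_def)
  have "x \<in> split_cover V E S \<or> y \<in> split_cover V E S" if "split_edges E x y" for x y
  proof -
    obtain a b c d where xy: "x = (a, b)" "y = (c, d)" by fastforce
    from that have "E a c" "b \<or> d" by (auto simp: xy split_edges_def)
    moreover have "E c a" using \<open>E a c\<close> by (rule sym)
    ultimately show ?thesis
      using assms(2) EV unfolding xy split_cover_def independent_set_def nbhd_def
      by (cases b; cases d) (auto simp: image_iff)
  qed
  moreover have "split_cover V E S \<subseteq> split_vertices V"
    by (auto simp: split_cover_def split_vertices_def nbhd_def)
  ultimately show ?thesis by (auto simp: vertex_cover_def)
qed

lemma independent_set_uncovered:
  assumes "vertex_cover (split_vertices V) (split_edges E) C"
  shows "independent_set V E {v \<in> V. (v, True) \<notin> C}"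
  using assms by (fastforce simp: independent_set_def vertex_cover_def split_edges_def)

lemma split_cover_uncovered_subset:
  assumes "vertex_cover (split_vertices V) (split_edges E) C"
  shows "split_cover V E {v \<in> V. (v, True) \<notin> C} \<subseteq> C"
proof -
  have "(w, False) \<in> C" if "E u w" and "(u, True) \<notin> C" for u w
  proof -
    have "split_edges E (u, True) (w, False)" using \<open>E u w\<close> by (simp add: split_edges_def)
    then show ?thesis using assms that unfolding vertex_cover_def by blast
  qed
  then show ?thesis by (auto simp: split_cover_def nbhd_def)
qed

lemma card_vertex_cover_split_ge:
  assumes "finite V" and C: "vertex_cover (split_vertices V) (split_edges E) C"
  shows "int (card V) - beta0_star V E \<le> int (card C)"
proof -
  define A where "A = {v \<in> V. (v, True) \<notin> C}"
  have "finite C"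
    using C finite_split_vertices[OF \<open>finite V\<close>] by (auto simp: vertex_cover_def finite_subset)
  then have "card (split_cover V E A) \<le> card C"
    using split_cover_uncovered_subset[OF C] by (simp add: A_def card_mono)
  moreover have "int (card (split_cover V E A)) = int (card V) - int (card A) + int (card (nbhd V E A))"
    using \<open>finite V\<close> by (intro card_split_cover) (auto simp: A_def)
  moreover have "int (card A) - int (card (nbhd V E A)) \<le> beta0_star V E"
    using \<open>finite V\<close> independent_set_uncovered[OF C] by (simp add: A_def beta0_star_ge)
  ultimately show ?thesis by linarith
qed

theorem corollary1:
  fixes V :: "'a set" and E :: "'a \<Rightarrow> 'a \<Rightarrow> bool"
  assumes "simple_graph V E" and "connected_graph V E" and "card V \<ge> 2"
  shows "int (vertex_cover_number (split_vertices V) (split_edges E)) = int (card V) - beta0_star V E"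
proof -
  have "finite V" using assms(1) by (simp add: simple_graph_def)
  obtain S where S: "independent_set V E S"
    and \<beta>: "beta0_star V E = int (card S) - int (card (nbhd V E S))"
    using beta0_star_attained[OF \<open>finite V\<close>] .
  have cover: "vertex_cover (split_vertices V) (split_edges E) (split_cover V E S)"
    using assms(1) S by (rule vertex_cover_split_cover)
  have size: "int (card (split_cover V E S)) = int (card V) - beta0_star V E"
    using \<open>finite V\<close> S by (simp add: card_split_cover independent_set_def \<beta>)
  have "vertex_cover_number (split_vertices V) (split_edges E) = card (split_cover V E S)"
  proof (rule vertex_cover_number_eqI[OF finite_split_vertices[OF \<open>finite V\<close>] cover])
    fix C assume "vertex_cover (split_vertices V) (split_edges E) C"
    then show "card (split_cover V E S) \<le> card C"
      using card_vertex_cover_split_ge[OF \<open>finite V\<close>] size by fastforce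
  qed
  then show ?thesis using size by simp
qed

end
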